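(* For integers $1\le N\le 50$, a $PCS_6^N$ exists if and only if $N=1$ or $N$ is even.
   Context: A binary sequence of length $N$ is a sequence $a=(a(0),\dots,a(N-1))$ with each $a(i)\in\{+1,-1\}$. Its periodic autocorrelation function is $\tilde\varphi_a(i)=\sum_{j=0}^{N-1}a(j)a(i+j \bmod N)$ for $0\le i<N$. A family $a_1,\dots,a_p$ of binary sequences, all of length $N$, is a $PCS_p^N$ (periodic complementary set) if $\sum_{k=1}^p\tilde\varphi_{a_k}(i)=0$ for all $0<i<N$. The sequences in a family need not be distinct. *)

theory Defs
  imports Main
begin

text \<open>A binary sequence of length N: a function on indices 0..N-1 with values +1/-1
  (values outside the index range are irrelevant).\<close>
definition binary_seq :: "nat \<Rightarrow> (nat \<Rightarrow> int) \<Rightarrow> bool" where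
  "binary_seq N a \<longleftrightarrow> (\<forall>j<N. a j = 1 \<or> a j = -1)"

definition per_autocorr :: "nat \<Rightarrow> (nat \<Rightarrow> int) \<Rightarrow> nat \<Rightarrow> int" where
  "per_autocorr N a i = (\<Sum>j<N. a j * a ((i + j) mod N))"

text \<open>A family a_1..a_p (indexed here by k < p) is a PCS_p^N.\<close>
definition is_PCS :: "nat \<Rightarrow> nat \<Rightarrow> (nat \<Rightarrow> nat \<Rightarrow> int) \<Rightarrow> bool" where
  "is_PCS p N A \<longleftrightarrow> (\<forall>k<p. binary_seq N (A k)) \<and>
     (\<forall>i. 0 < i \<and> i < N \<longrightarrow> (\<Sum>k<p. per_autocorr N (A k) i) = 0)"

definition PCS_exists :: "nat \<Rightarrow> nat \<Rightarrow> bool" where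
  "PCS_exists p N \<longleftrightarrow> (\<exists>A. is_PCS p N A)"

end

theory Submission
  imports Defs "HOL-Number_Theory.Cong"
begin

(* Nonexistence: write a binary sequence as a = 2b - 1 with b a 0/1-sequence.  Expanding
   the product shows that every periodic autocorrelation of a binary sequence of length N
   is congruent to N modulo 4.  Summing over a PCS_p^N at any shift 0 < i < N (possible
   since N >= 2) gives 0 = p N (mod 4); for p = 6 this forces N to be even.
   Existence: for N = 1 every family of p sequences is trivially a PCS, and for each even
   N <= 50 we exhibit an explicit PCS_6^N, encoded as six strings over {+,-}. *)

lemma sum_cyclic_shift:
  fixes f :: "nat \<Rightarrow> 'a::comm_monoid_add"
  assumes "0 < N"
  shows "(\<Sum>j<N. f ((i + j) mod N)) = (\<Sum>j<N. f j)"
proof -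
  let ?shift = "\<lambda>j. (i + j) mod N"
  have inj: "inj_on ?shift {..<N}"
  proof (rule inj_onI)
    fix x y assume "x \<in> {..<N}" "y \<in> {..<N}" "(i + x) mod N = (i + y) mod N"
    then show "x = y"
      using cong_add_lcancel_nat[of i x y N] unfolding cong_def by simp
  qed
  have onto: "?shift ` {..<N} = {..<N}"
    by (rule endo_inj_surj) (use inj assms in auto)
  show ?thesis
    using sum.reindex[OF inj, of f] onto by simp
qed

lemma per_autocorr_cong_length:
  assumes "binary_seq N a" and "0 < N"
  shows "(4::int) dvd (per_autocorr N a i - int N)"
proof -
  define b where "b j = (a j + 1) div 2" for j
  have a_eq: "a j = 2 * b j - 1" if "j < N" for j
    using assms(1) that unfolding binary_seq_def b_def by auto
  have "per_autocorr N a i = (\<Sum>j<N. (2 * b j - 1) * (2 * b ((i + j) mod N) - 1))"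
    unfolding per_autocorr_def using a_eq assms(2) by (intro sum.cong) auto
  also have "\<dots> = (\<Sum>j<N. 4 * (b j * b ((i + j) mod N)) - 2 * b j - 2 * b ((i + j) mod N) + 1)"
    by (intro sum.cong) (auto simp: algebra_simps)
  also have "\<dots> = 4 * (\<Sum>j<N. b j * b ((i + j) mod N)) - 2 * (\<Sum>j<N. b j)
                   - 2 * (\<Sum>j<N. b ((i + j) mod N)) + int N"
    by (simp add: sum.distrib sum_subtractf sum_distrib_left)
  also have "\<dots> = 4 * ((\<Sum>j<N. b j * b ((i + j) mod N)) - (\<Sum>j<N. b j)) + int N"
    using sum_cyclic_shift[OF assms(2), of b i] by simp
  finally show ?thesis by simp
qed

lemma PCS_length_condition:
  assumes "is_PCS p N A" and "2 \<le> N"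
  shows "(4::int) dvd (int p * int N)"
proof -
  have binary: "binary_seq N (A k)" if "k < p" for k
    using assms(1) that unfolding is_PCS_def by blast
  have zero: "(\<Sum>k<p. per_autocorr N (A k) 1) = 0"
    using assms unfolding is_PCS_def by auto
  have "(4::int) dvd (\<Sum>k<p. per_autocorr N (A k) 1 - int N)"
    using binary assms(2) by (intro dvd_sum per_autocorr_cong_length) auto
  also have "(\<Sum>k<p. per_autocorr N (A k) 1 - int N) = - (int p * int N)"
    using zero by (simp add: sum_subtractf)
  finally show ?thesis by simp
qed

lemma PCS6_even_length:
  assumes "PCS_exists 6 N" and "2 \<le> N"
  shows "even N"
proof -
  obtain A where "is_PCS 6 N A"
    using assms(1) unfolding PCS_exists_def by blast
  then have "(4::int) dvd (6 * int N)"
    using PCS_length_condition assms(2) by fastforce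
  then obtain k :: int where "6 * int N = 4 * k" by (elim dvdE)
  then have "int (3 * N) = 2 * k" by simp
  then have "even (3 * N)" by (metis even_of_nat dvd_triv_left)
  then show ?thesis by simp
qed

(* Sequences of length 1 have no nontrivial shifts, so any family is a PCS. *)
lemma PCS_exists_length_one: "PCS_exists p 1"
proof -
  have "is_PCS p 1 (\<lambda>k j. 1)"
    by (auto simp: is_PCS_def binary_seq_def)
  then show ?thesis unfolding PCS_exists_def by blast
qed

(* Witnesses are written as strings over {+,-}; this reads them as +1/-1 sequences. *)
definition signs :: "string \<Rightarrow> int list" where
  "signs s = map (\<lambda>c. if c = CHR ''+'' then 1 else -1) s"

definition list_autocorr :: "int list \<Rightarrow> nat \<Rightarrow> int" where
  "list_autocorr s i = sum_list (map2 (*) s (rotate i s))"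

definition PCS_witness :: "nat \<Rightarrow> nat \<Rightarrow> string list \<Rightarrow> bool" where
  "PCS_witness p N L \<longleftrightarrow> length L = p \<and> list_all (\<lambda>s. length s = N) L \<and>
     list_all (\<lambda>i. sum_list (map (\<lambda>s. list_autocorr (signs s) i) L) = 0) [1..<N]"

lemma list_autocorr_eq:
  assumes "length s = N" and "i < N"
  shows "list_autocorr s i = (\<Sum>j<N. s ! j * s ! ((i + j) mod N))"
  using assms unfolding list_autocorr_def
  by (simp add: sum_list_sum_nth lessThan_atLeast0 nth_rotate add.commute)

lemma PCS_witness_sound:
  assumes "PCS_witness p N L"
  shows "PCS_exists p N"
proof -
  define A where "A k = (\<lambda>j. signs (L ! k) ! j)" for k
  have len: "length L = p" and lens: "\<And>k. k < p \<Longrightarrow> length (L ! k) = N"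
    using assms by (auto simp: PCS_witness_def list_all_length)
  have binary: "binary_seq N (A k)" if "k < p" for k
    using lens[OF that] by (auto simp: binary_seq_def A_def signs_def)
  have autocorr: "per_autocorr N (A k) i = list_autocorr (signs (L ! k)) i"
    if "k < p" "i < N" for k i
    using list_autocorr_eq[of "signs (L ! k)" N i] lens[OF that(1)] that(2)
    unfolding per_autocorr_def A_def by (simp add: signs_def)
  have "(\<Sum>k<p. per_autocorr N (A k) i) = 0" if "0 < i" "i < N" for i
  proof -
    have "(\<Sum>k<p. per_autocorr N (A k) i) = (\<Sum>k<p. list_autocorr (signs (L ! k)) i)"
      by (rule sum.cong) (auto simp: autocorr that)
    also have "\<dots> = sum_list (map (\<lambda>s. list_autocorr (signs s) i) L)"
      by (simp add: sum_list_sum_nth len lessThan_atLeast0)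
    also have "\<dots> = 0"
      using assms that by (auto simp: PCS_witness_def list_all_iff)
    finally show ?thesis .
  qed
  with binary have "is_PCS p N A" by (auto simp: is_PCS_def)
  then show ?thesis unfolding PCS_exists_def by blast
qed

(* Explicit PCS_6^N for the even lengths N = 2, 4, ..., 50 (found by computer search). *)
definition PCS6_table :: "(nat \<times> string list) list" where
  "PCS6_table = [
    (2, [''--'', ''+-'', ''--'', ''--'', ''-+'', ''+-'']),
    (4, [''--+-'', ''----'', ''-++-'', ''-+-+'', ''-++-'', ''-+--'']),
    (6, [''--+---'', ''---+++'', ''++-+++'', ''+-++--'', ''-+---+'', ''++-+--'']),
    (8, [''--+-----'', ''-+--++-+'', ''-++--+--'', ''-+---+++'', ''-+----++'', ''++++-+--'']),
    (10, [''-++------+'', ''-++++--++-'', ''-+---+---+'', ''++-+--++++'', ''+++--+----'', ''-+-+--+--+'']),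
    (12, [''--++--------'', ''++-+--+--+-+'', ''+++--+---++-'', ''+-+-+++----+'', ''+--+---+++--'', ''+-++++--+-+-'']),
    (14, [''---+--+++-++-+'', ''-++++--++-+++-'', ''-++-+---++----'', ''++-+-++--++++-'', ''++-+--+----+++'', ''-+-+-+-------+'']),
    (16, [''+--++--+--+-+-+-'', ''--+++++------+--'', ''-++-+++++-++++--'', ''++---+-+++++-+++'', ''+-+-+--+--+++--+'', ''+++--++--+-++-+-'']),
    (18, [''+++++-++--++----+-'', ''--++-+---+++-+-+--'', ''-++++++-+++-++-+-+'', ''--+-++-+--+---+++-'', ''-++----++++++++-+-'', ''-+++--+-++-+++-++-'']),
    (20, [''++--+---++++-+++++--'', ''++-+-++-+-++++---+-+'', ''--+-+-+--+++--+++---'', ''----++-++-------+--+'', ''--+-++++++--+-+-+-++'', ''--+--+--+----+++-+++'']),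
    (22, [''++-+++++-+++-+++--+-++'', ''+++----+-+----++-+-+--'', ''-+---+---++++--+-+--++'', ''----++-+-+-++-++--+-+-'', ''-+++-++---++--+-----++'', ''++++-+-----+--++----++'']),
    (24, [''-+++-----+--+-+++--+-+-+'', ''++--++-++--++++-+--++--+'', ''+++++--+++++++-++++----+'', ''-+-----++--++-+-++---++-'', ''--+-++++++++----+--+-+-+'', ''++-+-+++-+-+-+--+--+--++'']),
    (26, [''-+-+----++++--+++++-++----'', ''-+-+-+---+-+--+-++++++--+-'', ''--++++++++-+-++++-++---+++'', ''---++-+++-+++--+--+-+++-+-'', ''++-----+-+-+-++---++-++---'', ''--++--+-+----+--++-++--+--'']),
    (28, [''++-+--+++-+-++++--+---+++-+-'', ''-+-+++-+---+-++---+-+++-++--'', ''++--+--------+--++---+++-++-'', ''---++++---+---+---+++-+-++--'', ''+--+-+--+----+++++++-+-++---'', ''-+--+-+--+---+++----+-----+-'']),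
    (30, [''---+----+-+-++---+++++++-++--+'', ''-+--+--+--+--++++++++---++-+-+'', ''-+---+++++-+-++++---+-+++-++-+'', ''+--+--+-++++++--+++-+++-+-++++'', ''++-+++--++----+++--+--++---+++'', ''-++-+--+-+++-+++---+++-++-++-+'']),
    (32, [''-++++-++-+-+++-+--+--+-----++--+'', ''+---++--++-+-+++--------+-+-+++-'', ''----++++-----++-++-+-+---++----+'', ''------+--+---+---+-++-+--+++-+--'', ''-+-+-+++++---+++---++--++--++-+-'', ''+-++++-+-+--++---++-++-++++++---'']),
    (34, [''-+--+--+++--+++-+++-+--++-++-++--+'', ''--++-+++-++-+-++-----+---+---+-++-'', ''---++-+-+----+-+++++--++-++++-++++'', ''++-----+++---+++--------+++++-+---'', ''-++-+--++-+-+-++-+++++++++--+-+-++'', ''--++++-+-+-+-+--+++++----+---++--+'']),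
    (36, [''+-+-+++++--++-+----+++++---+---++---'', ''+++++-+-++--++++-+--+-+--+---+--++-+'', ''--+-+++-+++++--++-+-++--+-+--+++-++-'', ''-++++-+++-+-++--+++++--+++++--+---++'', ''--++++-+-----++-+++++-+++++++--+++--'', ''-++-+----+-+--+++-+-+++-+-+-++--+--+'']),
    (38, [''--+---+-+--+-++++--+-+++-+++--+---+-++'', ''-+++-+-+++-++++++-+-++---++--+++++++--'', ''+---+-++-+++++---++++++-++-+--------+-'', ''+++-+-++++-++-----+-+-++++-+--+--++--+'', ''---+-+-+--++-+++--++--+--+-+-+++---++-'', ''+-++--++++--+--+++-++-+--+-+++++---+++'']),
    (40, [''++++---++--+-+--+++-++++-++++-+-+-++---+'', ''+-+--+--++-----++-+++-+---+-+++++++--+--'', ''----+---++-++--+-++-+-+-----+-+-++-----+'', ''-+-+++-++---++----++++++-+-++++++--+-+--'', ''----++--+-+++-+-+++-----+--+++-++--+++++'', ''-+-++--++++-+++++-++-+-+++--+---++--+-+-'']),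
    (42, [''-----+-+---+--+---+-+++---+-+-++-+++----++'', ''++++-+-++-+++---+-++-++-++++---++-+++-----'', ''++---+-++++-+++--+-++----+-+--+----+--+++-'', ''-+---+--+-++++--+--++++--+-----+-+++-++++-'', ''-++++-++-++-+++-----+---+++-+++++-++-+++++'', ''-+-+---++---++-+-+-+-+----+-++--++-+++++--'']),
    (44, [''++++-++-+-+-+-++--+++-+---+-++++---++--++-+-'', ''+-+---+++++++++--++-++++-++++-+--+--++--++++'', ''--+------+++---+--+++-++++---+++--+--+--+++-'', ''-+++-+-+--+--+---++-+++-+--+--+--+++---++-++'', ''-+++++++--+++-------+-++----++-+--------++++'', ''--+-+-+--++-++-+-+-++++--+-++----+-+-+-++-+-'']),
    (46, [''+-+---+---+---++-+++------++---+++--+-++--+--+'', ''-+--+-+-+-++---++-+++++-+-+---+-+-++----+--+--'', ''+-++++-+----+++--+++----+-+-+++++--+-+---+-++-'', ''+-++-----++-+++---+--+---+----+---+++-+-++-+--'', ''++++---+++-+++--++-++------+--+-+-+++++++-++-+'', ''++++++----++-+-----+-----+++--+--+--+--++---+-'']),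
    (48, [''-++++-+--+-+---+-++----+++-++++-++----++-++---++'', ''--+-++++-----+----++-+--+---+-+++--+-++---++-++-'', ''+-+++-+-+-----+++++-+-+++++--++-+++++------+-++-'', ''+++-++++++-+-++-+-+++++-+-++--+++-+-++-+-+----++'', ''-+-++--++-+++++++-+++-++---+----++----++--+--+++'', ''----++--+++-+-+-+++-+++--+---+-++--+-++--+++--+-'']),
    (50, [''+++-++--++-+-++-+-+++-+--------++--+++-++--+-+++--'', ''-+--++-++--++----++++++--++-++++++---+++--++-+-+-+'', ''-+-++++--+-----+---+-------+--+---++++---+--+-+--+'', ''+-------+++++++-+---++--+-++-++--++++-++++-+--+-++'', ''----++--++++-+-++-------+-++-+-+++-+-+-++-++--+-++'', ''+-+--++++-+-+--+-+-+---+--++----++-+---+++---+++++''])]"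

lemma PCS6_table_lengths: "map fst PCS6_table = map (\<lambda>m. 2 * m) [1..<26]"
  by code_simp

lemma PCS6_table_valid: "list_all (\<lambda>(N, L). PCS_witness 6 N L) PCS6_table"
  by code_simp

lemma PCS6_exists_even:
  assumes "even N" and "2 \<le> N" and "N \<le> 50"
  shows "PCS_exists 6 N"
proof -
  have "N \<in> set (map (\<lambda>m. 2 * m) [1..<26])"
    using assms by (auto elim!: evenE)
  then obtain L where "(N, L) \<in> set PCS6_table"
    unfolding PCS6_table_lengths[symmetric] by auto
  then have "PCS_witness 6 N L"
    using PCS6_table_valid by (auto simp: list_all_iff)
  then show ?thesis by (rule PCS_witness_sound)
qed

theorem proposition5:
  fixes N :: nat
  assumes "1 \<le> N" and "N \<le> 50"
  shows "PCS_exists 6 N \<longleftrightarrow> (N = 1 \<or> even N)"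
proof
  assume "PCS_exists 6 N"
  then show "N = 1 \<or> even N"
    using PCS6_even_length assms(1) by fastforce
next
  assume "N = 1 \<or> even N"
  then show "PCS_exists 6 N"
  proof
    assume "N = 1"
    then show ?thesis using PCS_exists_length_one by simp
  next
    assume "even N"
    then have "2 \<le> N" using assms(1) by (cases "N = 1") auto
    then show ?thesis using PCS6_exists_even \<open>even N\<close> assms(2) by blast
  qed
qed

end
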